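(* If $X$ is a locally finite simplicial set, then the ring $\mathbb Z^{(X)}$ is $s$-unital: for every finite family $\phi_1,\dots,\phi_n\in\mathbb Z^{(X)}$ there exists $\mu\in\mathbb Z^{(X)}$ with $\phi_i\mu=\mu\phi_i=\phi_i$ for all $i$.
   Context: $\mathbb Z^{\Delta^n}=\mathbb Z[t_0,\dots,t_n]/(t_0+\dots+t_n-1)$ forms a simplicial ring; $\mathbb Z^X=\hom_{\mathrm{sSet}}(X,\mathbb Z^{\Delta^\bullet})$ with pointwise multiplication; the support of $\phi$ is the simplicial subset generated by the simplices on which $\phi$ is nonzero; $\mathbb Z^{(X)}$ is the ideal of elements with finite support. $X$ is locally finite if every simplex is a face of only finitely many nondegenerate simplices (i.e. for each $\sigma$, finitely many nondegenerate $\tau$ with $\langle\tau\rangle\supset\langle\sigma\rangle$). *)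

theory Defs
  imports Main "HOL-Library.Poly_Mapping"
begin

text \<open>A morphism [m] \<rightarrow> [n] of the simplex category: a monotone map {0..m} \<rightarrow> {0..n}
  (represented by a function nat \<Rightarrow> nat, only its values on {0..m} matter).\<close>
definition mono_map :: "nat \<Rightarrow> nat \<Rightarrow> (nat \<Rightarrow> nat) \<Rightarrow> bool" where
  "mono_map m n \<theta> \<longleftrightarrow> (\<forall>i\<le>m. \<theta> i \<le> n) \<and> (\<forall>i j. i \<le> j \<longrightarrow> j \<le> m \<longrightarrow> \<theta> i \<le> \<theta> j)"

text \<open>A simplicial set: sets X n of n-simplices together with the contravariant action
  act m n \<theta> : X n \<rightarrow> X m of each monotone \<theta> : [m] \<rightarrow> [n].\<close>
definition simplicial_set ::
  "(nat \<Rightarrow> 'a set) \<Rightarrow> (nat \<Rightarrow> nat \<Rightarrow> (nat \<Rightarrow> nat) \<Rightarrow> 'a \<Rightarrow> 'a) \<Rightarrow> bool" where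
  "simplicial_set X act \<longleftrightarrow>
     (\<forall>m n \<theta> x. mono_map m n \<theta> \<longrightarrow> x \<in> X n \<longrightarrow> act m n \<theta> x \<in> X m) \<and>
     (\<forall>n x. x \<in> X n \<longrightarrow> act n n id x = x) \<and>
     (\<forall>l m n \<psi> \<theta> x. mono_map l m \<psi> \<longrightarrow> mono_map m n \<theta> \<longrightarrow> x \<in> X n \<longrightarrow>
        act l m \<psi> (act m n \<theta> x) = act l n (\<theta> \<circ> \<psi>) x) \<and>
     (\<forall>m n \<theta> \<theta>' x. mono_map m n \<theta> \<longrightarrow> (\<forall>i\<le>m. \<theta> i = \<theta>' i) \<longrightarrow> x \<in> X n \<longrightarrow>
        act m n \<theta> x = act m n \<theta>' x)"

definition simplices :: "(nat \<Rightarrow> 'a set) \<Rightarrow> (nat \<times> 'a) set" where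
  "simplices X = {(n, x). x \<in> X n}"

definition degenerate ::
  "(nat \<Rightarrow> 'a set) \<Rightarrow> (nat \<Rightarrow> nat \<Rightarrow> (nat \<Rightarrow> nat) \<Rightarrow> 'a \<Rightarrow> 'a) \<Rightarrow> nat \<Rightarrow> 'a \<Rightarrow> bool" where
  "degenerate X act n x \<longleftrightarrow>
     (\<exists>m<n. \<exists>\<theta> y. mono_map n m \<theta> \<and> y \<in> X m \<and> x = act n m \<theta> y)"

definition generated ::
  "(nat \<Rightarrow> nat \<Rightarrow> (nat \<Rightarrow> nat) \<Rightarrow> 'a \<Rightarrow> 'a) \<Rightarrow> nat \<times> 'a \<Rightarrow> (nat \<times> 'a) set" where
  "generated act \<sigma> = {(m, act m (fst \<sigma>) \<theta> (snd \<sigma>)) | m \<theta>. mono_map m (fst \<sigma>) \<theta>}"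

text \<open>Locally finite: every simplex is a face of only finitely many nondegenerate simplices,
  i.e. for each \<sigma> there are finitely many nondegenerate \<tau> with \<langle>\<tau>\<rangle> \<supseteq> \<langle>\<sigma>\<rangle>.\<close>
definition locally_finite ::
  "(nat \<Rightarrow> 'a set) \<Rightarrow> (nat \<Rightarrow> nat \<Rightarrow> (nat \<Rightarrow> nat) \<Rightarrow> 'a \<Rightarrow> 'a) \<Rightarrow> bool" where
  "locally_finite X act \<longleftrightarrow>
     (\<forall>\<sigma>\<in>simplices X. finite {\<tau>\<in>simplices X. \<not> degenerate X act (fst \<tau>) (snd \<tau>) \<and>
                                  generated act \<sigma> \<subseteq> generated act \<tau>})"

text \<open>Integer polynomials in the variables t_0, t_1, ... (monomials are exponent vectors).\<close>
type_synonym ipoly = "(nat \<Rightarrow>\<^sub>0 nat) \<Rightarrow>\<^sub>0 int"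

definition pvar :: "nat \<Rightarrow> ipoly" where
  "pvar i = Poly_Mapping.single (Poly_Mapping.single i 1) 1"

definition polys_upto :: "nat \<Rightarrow> ipoly set" where
  "polys_upto n = {p. \<forall>mon\<in>Poly_Mapping.keys p. \<forall>j\<in>Poly_Mapping.keys mon. j \<le> n}"

definition simplex_rel :: "nat \<Rightarrow> ipoly" where
  "simplex_rel n = (\<Sum>i\<le>n. pvar i) - 1"

text \<open>Equality in the quotient ring Z^{\<Delta>^n}: difference lies in the ideal (t_0+...+t_n-1).\<close>
definition delta_eq :: "nat \<Rightarrow> ipoly \<Rightarrow> ipoly \<Rightarrow> bool" where
  "delta_eq n p q \<longleftrightarrow> (\<exists>r\<in>polys_upto n. p - q = r * simplex_rel n)"

definition psubst :: "(nat \<Rightarrow> ipoly) \<Rightarrow> ipoly \<Rightarrow> ipoly" where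
  "psubst s p = (\<Sum>mon\<in>Poly_Mapping.keys p.
      of_int (Poly_Mapping.lookup p mon) *
      (\<Prod>j\<in>Poly_Mapping.keys mon. s j ^ Poly_Mapping.lookup mon j))"

definition delta_pull :: "nat \<Rightarrow> (nat \<Rightarrow> nat) \<Rightarrow> ipoly \<Rightarrow> ipoly" where
  "delta_pull m \<theta> p = psubst (\<lambda>j. \<Sum>i\<in>{i. i \<le> m \<and> \<theta> i = j}. pvar i) p"

text \<open>An element of Z^X = hom_sSet(X, Z^{\<Delta>^\<bullet>}), given by representatives
  \<phi> n x \<in> Z[t_0..t_n] of its components; two such are equal iff componentwise delta_eq.
  Multiplication is pointwise.\<close>
definition Zpow ::
  "(nat \<Rightarrow> 'a set) \<Rightarrow> (nat \<Rightarrow> nat \<Rightarrow> (nat \<Rightarrow> nat) \<Rightarrow> 'a \<Rightarrow> 'a) \<Rightarrow> (nat \<Rightarrow> 'a \<Rightarrow> ipoly) set" where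
  "Zpow X act = {\<phi>. (\<forall>n. \<forall>x\<in>X n. \<phi> n x \<in> polys_upto n) \<and>
      (\<forall>m n \<theta> x. mono_map m n \<theta> \<longrightarrow> x \<in> X n \<longrightarrow>
          delta_eq m (\<phi> m (act m n \<theta> x)) (delta_pull m \<theta> (\<phi> n x)))}"

definition support ::
  "(nat \<Rightarrow> 'a set) \<Rightarrow> (nat \<Rightarrow> nat \<Rightarrow> (nat \<Rightarrow> nat) \<Rightarrow> 'a \<Rightarrow> 'a) \<Rightarrow> (nat \<Rightarrow> 'a \<Rightarrow> ipoly) \<Rightarrow> (nat \<times> 'a) set" where
  "support X act \<phi> =
     (\<Union>\<sigma>\<in>{\<sigma>\<in>simplices X. \<not> delta_eq (fst \<sigma>) (\<phi> (fst \<sigma>) (snd \<sigma>)) 0}. generated act \<sigma>)"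

definition Zpow_fin ::
  "(nat \<Rightarrow> 'a set) \<Rightarrow> (nat \<Rightarrow> nat \<Rightarrow> (nat \<Rightarrow> nat) \<Rightarrow> 'a \<Rightarrow> 'a) \<Rightarrow> (nat \<Rightarrow> 'a \<Rightarrow> ipoly) set" where
  "Zpow_fin X act = {\<phi>\<in>Zpow X act.
      finite {\<sigma>\<in>support X act \<phi>. \<not> degenerate X act (fst \<sigma>) (snd \<sigma>)}}"

end

theory Submission
  imports Defs "HOL-Library.FuncSet"
begin

(* Let V be the finite set of vertices lying in the supports of the given
   functions phi_1, ..., phi_n.  The candidate unit is the "vertex indicator" of V,
     mu(x) = sum of the barycentric coordinates t_i over those vertices i of x that lie in V.
   It is natural in x, hence an element of Z^X.  Every nondegenerate simplex of its support
   is a face of a nondegenerate simplex having a vertex in V; by local finiteness there are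
   finitely many of those, each with finitely many nondegenerate faces, so mu has finite
   support.  Finally, if phi_k(x) is nonzero then every vertex of x lies in V, so
   mu(x) = t_0 + ... + t_n = 1 in Z^{Delta^n}; if phi_k(x) = 0 the identities are trivial. *)

section \<open>Polynomials in the variables t_0, ..., t_n\<close>

lemma polys_upto_add: "p \<in> polys_upto n \<Longrightarrow> q \<in> polys_upto n \<Longrightarrow> p + q \<in> polys_upto n"
  using keys_add[of p q] unfolding polys_upto_def by blast

lemma polys_upto_diff: "p \<in> polys_upto n \<Longrightarrow> q \<in> polys_upto n \<Longrightarrow> p - q \<in> polys_upto n"
  using keys_diff[of p q] unfolding polys_upto_def by blast

text \<open>A monomial of a product is a sum of monomials of the factors.\<close>
lemma polys_upto_mult:
  assumes p: "p \<in> polys_upto n" and q: "q \<in> polys_upto n"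
  shows "p * q \<in> polys_upto n"
  unfolding polys_upto_def mem_Collect_eq
proof (intro ballI)
  fix mon j
  assume mon: "mon \<in> Poly_Mapping.keys (p * q)" and j: "j \<in> Poly_Mapping.keys mon"
  obtain a b where ab: "mon = a + b" "a \<in> Poly_Mapping.keys p" "b \<in> Poly_Mapping.keys q"
    using keys_mult[of p q] mon by blast
  then show "j \<le> n"
    using j p q keys_add[of a b] unfolding polys_upto_def by blast
qed

lemma polys_upto_zero: "0 \<in> polys_upto n"
  by (simp add: polys_upto_def)

lemma polys_upto_one: "1 \<in> polys_upto n"
  by (simp add: polys_upto_def)

lemma polys_upto_pvar: "i \<le> n \<Longrightarrow> pvar i \<in> polys_upto n"
  by (simp add: polys_upto_def pvar_def)

lemma polys_upto_sum: "(\<And>i. i \<in> S \<Longrightarrow> f i \<in> polys_upto n) \<Longrightarrow> sum f S \<in> polys_upto n"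
  by (induction S rule: infinite_finite_induct) (auto simp: polys_upto_zero polys_upto_add)

lemma delta_eq_mult_one:
  assumes "delta_eq n q 1" and "p \<in> polys_upto n"
  shows "delta_eq n (p * q) p"
proof -
  obtain r where r: "r \<in> polys_upto n" "q - 1 = r * simplex_rel n"
    using assms(1) unfolding delta_eq_def by blast
  have "p * q - p = (p * r) * simplex_rel n"
    using r(2) by (simp add: algebra_simps flip: right_diff_distrib)
  then show ?thesis
    unfolding delta_eq_def using polys_upto_mult[OF assms(2) r(1)] by blast
qed

lemma delta_eq_mult_zero:
  assumes "delta_eq n p 0" and "q \<in> polys_upto n"
  shows "delta_eq n (p * q) p"
proof -
  obtain r where r: "r \<in> polys_upto n" "p = r * simplex_rel n"
    using assms(1) unfolding delta_eq_def by auto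
  have "p * q - p = (r * q - r) * simplex_rel n"
    using r(2) by (simp add: algebra_simps)
  then show ?thesis
    unfolding delta_eq_def using r(1) assms(2) by (blast intro: polys_upto_diff polys_upto_mult)
qed

lemma lookup_sum_pvar:
  assumes "finite S"
  shows "Poly_Mapping.lookup (\<Sum>i\<in>S. pvar i) mon =
           (if mon \<in> (\<lambda>i. Poly_Mapping.single i (1::nat)) ` S then 1 else 0)"
proof -
  have inj: "inj (\<lambda>i. Poly_Mapping.single i (1::nat))"
    by (rule injI) (metis lookup_single_eq lookup_single_not_eq one_neq_zero)
  have "Poly_Mapping.lookup (\<Sum>i\<in>S. pvar i) mon =
          (\<Sum>i\<in>S. if Poly_Mapping.single i 1 = mon then 1 else (0::int))"
    by (simp add: lookup_sum pvar_def lookup_single when_def eq_commute)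
  also have "\<dots> = (if mon \<in> (\<lambda>i. Poly_Mapping.single i (1::nat)) ` S then 1 else 0)"
  proof (cases "mon \<in> (\<lambda>i. Poly_Mapping.single i (1::nat)) ` S")
    case True
    then obtain i0 where i0: "i0 \<in> S" "mon = Poly_Mapping.single i0 1" by auto
    have "(\<Sum>i\<in>S. if Poly_Mapping.single i 1 = mon then 1 else (0::int)) =
            (\<Sum>i\<in>S. if i = i0 then 1 else 0)"
      using inj i0(2) by (intro sum.cong) (auto dest: injD)
    then show ?thesis using True i0 assms by simp
  next
    case False
    then show ?thesis by (auto intro!: sum.neutral)
  qed
  finally show ?thesis .
qed

lemma psubst_sum_pvar:
  assumes "finite S"
  shows "psubst s (\<Sum>i\<in>S. pvar i) = (\<Sum>i\<in>S. s i)"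
proof -
  let ?e = "\<lambda>i. Poly_Mapping.single i (1::nat)"
  have inj: "inj ?e"
    by (rule injI) (metis lookup_single_eq lookup_single_not_eq one_neq_zero)
  have keys: "Poly_Mapping.keys (\<Sum>i\<in>S. pvar i) = ?e ` S"
    using lookup_sum_pvar[OF assms] by (auto simp: in_keys_iff split: if_splits)
  have "psubst s (\<Sum>i\<in>S. pvar i) = (\<Sum>mon\<in>?e ` S.
      of_int (Poly_Mapping.lookup (\<Sum>i\<in>S. pvar i) mon) *
      (\<Prod>j\<in>Poly_Mapping.keys mon. s j ^ Poly_Mapping.lookup mon j))"
    unfolding psubst_def keys ..
  also have "\<dots> = (\<Sum>i\<in>S. s i)"
    by (rule sum.reindex_cong[OF inj_on_subset[OF inj subset_UNIV] refl])
       (simp add: lookup_sum_pvar[OF assms])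
  finally show ?thesis .
qed

section \<open>Simplicial sets\<close>

lemma mono_map_comp: "mono_map l m \<psi> \<Longrightarrow> mono_map m n \<theta> \<Longrightarrow> mono_map l n (\<theta> \<circ> \<psi>)"
  unfolding mono_map_def by auto

lemma mono_map_const: "i \<le> n \<Longrightarrow> mono_map k n (\<lambda>_. i)"
  unfolding mono_map_def by auto

lemma mono_map_id: "mono_map n n id"
  unfolding mono_map_def by auto

lemma generated_iff:
  "\<tau> \<in> generated act (n, x) \<longleftrightarrow> (\<exists>\<theta>. mono_map (fst \<tau>) n \<theta> \<and> snd \<tau> = act (fst \<tau>) n \<theta> x)"
  unfolding generated_def by (cases \<tau>) auto

lemma vertex_in_generated: "i \<le> n \<Longrightarrow> (0, act 0 n (\<lambda>_. i) x) \<in> generated act (n, x)"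
  by (auto simp: generated_iff intro: mono_map_const)

lemma mono_map_collapses:
  assumes "mono_map m n' \<theta>" "n' < m"
  shows "\<exists>j<m. \<theta> j = \<theta> (Suc j)"
proof (rule ccontr)
  assume "\<not> ?thesis"
  then have step: "\<And>j. j < m \<Longrightarrow> \<theta> j < \<theta> (Suc j)"
    using assms(1) unfolding mono_map_def by (metis Suc_leI le_SucI le_neq_implies_less order_refl)
  have "i \<le> m \<Longrightarrow> i \<le> \<theta> i" for i
  proof (induction i)
    case (Suc i)
    then show ?case using step[of i] by simp
  qed simp
  then have "m \<le> \<theta> m" by simp
  moreover have "\<theta> m \<le> n'" using assms(1) unfolding mono_map_def by simp
  ultimately show False using assms(2) by simp
qed

lemma mono_map_factor_codegeneracy:
  assumes \<theta>: "mono_map m n' \<theta>" and j: "j < m" "\<theta> j = \<theta> (Suc j)"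
  defines "s \<equiv> \<lambda>i::nat. if i \<le> j then i else i - 1"
    and "\<delta> \<equiv> \<lambda>i::nat. if i \<le> j then i else Suc i"
  shows "mono_map m (m - 1) s" "mono_map (m - 1) n' (\<theta> \<circ> \<delta>)"
    "\<And>i. i \<le> m \<Longrightarrow> \<theta> i = ((\<theta> \<circ> \<delta>) \<circ> s) i"
proof -
  show "mono_map m (m - 1) s" unfolding mono_map_def s_def using j by auto
  have "mono_map (m - 1) m \<delta>" unfolding mono_map_def \<delta>_def using j by auto
  then show "mono_map (m - 1) n' (\<theta> \<circ> \<delta>)" using \<theta> by (rule mono_map_comp)
  show "\<theta> i = ((\<theta> \<circ> \<delta>) \<circ> s) i" if "i \<le> m" for i
    using j by (cases "i \<le> j"; cases "i = Suc j") (auto simp: s_def \<delta>_def)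
qed

context
  fixes X :: "nat \<Rightarrow> 'a set" and act :: "nat \<Rightarrow> nat \<Rightarrow> (nat \<Rightarrow> nat) \<Rightarrow> 'a \<Rightarrow> 'a"
  assumes sset: "simplicial_set X act"
begin

lemma act_closed: "mono_map m n \<theta> \<Longrightarrow> x \<in> X n \<Longrightarrow> act m n \<theta> x \<in> X m"
  using sset unfolding simplicial_set_def by blast

lemma act_id: "x \<in> X n \<Longrightarrow> act n n id x = x"
  using sset unfolding simplicial_set_def by blast

lemma act_comp: "mono_map l m \<psi> \<Longrightarrow> mono_map m n \<theta> \<Longrightarrow> x \<in> X n \<Longrightarrow>
    act l m \<psi> (act m n \<theta> x) = act l n (\<theta> \<circ> \<psi>) x"
  using sset unfolding simplicial_set_def by blast

lemma act_cong: "mono_map m n \<theta> \<Longrightarrow> (\<And>i. i \<le> m \<Longrightarrow> \<theta> i = \<theta>' i) \<Longrightarrow> x \<in> X n \<Longrightarrow>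
    act m n \<theta> x = act m n \<theta>' x"
  using sset unfolding simplicial_set_def by blast

lemma generated_subset_simplices: "x \<in> X n \<Longrightarrow> generated act (n, x) \<subseteq> simplices X"
  by (auto simp: generated_iff simplices_def intro: act_closed)

lemma generated_self: "x \<in> X n \<Longrightarrow> (n, x) \<in> generated act (n, x)"
  using act_id mono_map_id unfolding generated_iff by (metis fst_conv snd_conv)

lemma generated_trans:
  assumes x: "x \<in> X n" and \<tau>: "\<tau> \<in> generated act (n, x)"
  shows "generated act \<tau> \<subseteq> generated act (n, x)"
proof
  fix \<sigma> assume \<sigma>: "\<sigma> \<in> generated act \<tau>"
  obtain \<theta> where \<theta>: "mono_map (fst \<tau>) n \<theta>" "\<tau> = (fst \<tau>, act (fst \<tau>) n \<theta> x)"
    using \<tau> by (cases \<tau>) (auto simp: generated_iff)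
  obtain \<psi> where \<psi>: "mono_map (fst \<sigma>) (fst \<tau>) \<psi>"
      "snd \<sigma> = act (fst \<sigma>) (fst \<tau>) \<psi> (act (fst \<tau>) n \<theta> x)"
    using \<sigma> \<theta>(2) by (metis generated_iff)
  then have "snd \<sigma> = act (fst \<sigma>) n (\<theta> \<circ> \<psi>) x" using act_comp \<theta>(1) x by simp
  then show "\<sigma> \<in> generated act (n, x)"
    using mono_map_comp[OF \<psi>(1) \<theta>(1)] by (auto simp: generated_iff)
qed

lemma degeneracy_of_nondegenerate:
  "x \<in> X n \<Longrightarrow> \<exists>n' y \<theta>. y \<in> X n' \<and> \<not> degenerate X act n' y \<and> mono_map n n' \<theta> \<and> x = act n n' \<theta> y"
proof (induction n arbitrary: x rule: less_induct)
  case (less n)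
  show ?case
  proof (cases "degenerate X act n x")
    case False
    then show ?thesis using less.prems act_id[OF less.prems] mono_map_id by metis
  next
    case True
    then obtain m \<theta> z where m: "m < n" "mono_map n m \<theta>" "z \<in> X m" "x = act n m \<theta> z"
      unfolding degenerate_def by blast
    obtain n' y \<theta>' where y: "y \<in> X n'" "\<not> degenerate X act n' y"
        "mono_map m n' \<theta>'" "z = act m n' \<theta>' y"
      using less.IH[OF m(1) m(3)] by blast
    have "x = act n n' (\<theta>' \<circ> \<theta>) y" using m y act_comp by simp
    then show ?thesis using y mono_map_comp[OF m(2) y(3)] by blast
  qed
qed

lemma nondegenerate_face_dim:
  assumes y: "y \<in> X n'" and \<theta>: "mono_map m n' \<theta>"
    and nd: "\<not> degenerate X act m (act m n' \<theta> y)"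
  shows "m \<le> n'"
proof (rule ccontr)
  assume "\<not> m \<le> n'"
  then have mn: "n' < m" by simp
  obtain j where j: "j < m" "\<theta> j = \<theta> (Suc j)" using mono_map_collapses[OF \<theta> mn] by blast
  obtain s \<theta>' where s: "mono_map m (m - 1) s" and \<theta>': "mono_map (m - 1) n' \<theta>'"
      and fac: "\<And>i. i \<le> m \<Longrightarrow> \<theta> i = (\<theta>' \<circ> s) i"
    using mono_map_factor_codegeneracy[OF \<theta> j] by blast
  have "act m n' \<theta> y = act m (m - 1) s (act (m - 1) n' \<theta>' y)"
    using act_cong[OF \<theta> fac y] act_comp[OF s \<theta>' y] by (simp add: comp_def)
  then have "degenerate X act m (act m n' \<theta> y)"
    unfolding degenerate_def using s act_closed[OF \<theta>' y] mn by (metis diff_less less_nat_zero_code neq0_conv zero_less_one)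
  then show False using nd by simp
qed

text \<open>Hence a simplex has only finitely many nondegenerate faces: they are determined by
  a dimension m \<le> n' and a map {0..m} \<rightarrow> {0..n'}.\<close>
lemma finite_nondegenerate_faces:
  assumes y: "y \<in> X n'"
  shows "finite {\<tau> \<in> generated act (n', y). \<not> degenerate X act (fst \<tau>) (snd \<tau>)}"
proof -
  let ?A = "SIGMA m:{..n'}. PiE {..m} (\<lambda>_. {..n'})"
  have "{\<tau> \<in> generated act (n', y). \<not> degenerate X act (fst \<tau>) (snd \<tau>)} \<subseteq>
          (\<lambda>(m, f). (m, act m n' f y)) ` ?A"
  proof
    fix \<tau> assume \<tau>: "\<tau> \<in> {\<tau> \<in> generated act (n', y). \<not> degenerate X act (fst \<tau>) (snd \<tau>)}"
    then obtain \<theta> where \<theta>: "mono_map (fst \<tau>) n' \<theta>" "snd \<tau> = act (fst \<tau>) n' \<theta> y"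
      by (auto simp: generated_iff)
    have le: "fst \<tau> \<le> n'" using nondegenerate_face_dim[OF y \<theta>(1)] \<tau> \<theta>(2) by simp
    have r: "restrict \<theta> {..fst \<tau>} \<in> PiE {..fst \<tau>} (\<lambda>_. {..n'})"
      using \<theta>(1) unfolding mono_map_def by auto
    have "act (fst \<tau>) n' \<theta> y = act (fst \<tau>) n' (restrict \<theta> {..fst \<tau>}) y"
      by (rule act_cong[OF \<theta>(1) _ y]) auto
    then have "\<tau> = (\<lambda>(m, f). (m, act m n' f y)) (fst \<tau>, restrict \<theta> {..fst \<tau>})"
      using \<theta>(2) by (cases \<tau>) auto
    then show "\<tau> \<in> (\<lambda>(m, f). (m, act m n' f y)) ` ?A" using le r by blast
  qed
  moreover have "finite ?A" by (intro finite_SigmaI finite_PiE) auto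
  ultimately show ?thesis using finite_subset by blast
qed

end

lemma in_supportE:
  assumes "\<sigma> \<in> support X act \<phi>"
  obtains n x where "x \<in> X n" "\<not> delta_eq n (\<phi> n x) 0" "\<sigma> \<in> generated act (n, x)"
proof -
  obtain \<tau> where "\<tau> \<in> simplices X" "\<not> delta_eq (fst \<tau>) (\<phi> (fst \<tau>) (snd \<tau>)) 0"
      "\<sigma> \<in> generated act \<tau>"
    using assms unfolding support_def by blast
  then show thesis using that by (cases \<tau>) (auto simp: simplices_def)
qed

context
  fixes X :: "nat \<Rightarrow> 'a set" and act :: "nat \<Rightarrow> nat \<Rightarrow> (nat \<Rightarrow> nat) \<Rightarrow> 'a \<Rightarrow> 'a"
  assumes sset: "simplicial_set X act"
begin

lemma support_subset_simplices: "support X act \<phi> \<subseteq> simplices X"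
  unfolding support_def using generated_subset_simplices[OF sset] by (auto simp: simplices_def)

lemma nonzero_in_support:
  "x \<in> X n \<Longrightarrow> \<not> delta_eq n (\<phi> n x) 0 \<Longrightarrow> (n, x) \<in> support X act \<phi>"
  unfolding support_def using generated_self[OF sset] by (force simp: simplices_def)

lemma vertex_in_support:
  assumes "(n, x) \<in> support X act \<phi>" "i \<le> n"
  shows "(0, act 0 n (\<lambda>_. i) x) \<in> support X act \<phi>"
proof -
  obtain \<sigma> where \<sigma>: "\<sigma> \<in> simplices X" "\<not> delta_eq (fst \<sigma>) (\<phi> (fst \<sigma>) (snd \<sigma>)) 0"
      "(n, x) \<in> generated act \<sigma>"
    using assms(1) unfolding support_def by blast
  have "(0, act 0 n (\<lambda>_. i) x) \<in> generated act \<sigma>"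
    using generated_trans[OF sset, of "snd \<sigma>" "fst \<sigma>" "(n, x)"] vertex_in_generated[OF assms(2), of act x] \<sigma>
    by (cases \<sigma>) (auto simp: simplices_def)
  then show ?thesis using \<sigma>(1,2) unfolding support_def by blast
qed

lemma finite_support_vertices:
  assumes "\<phi> \<in> Zpow_fin X act"
  shows "finite {v. (0, v) \<in> support X act \<phi>}"
proof -
  have "{v. (0, v) \<in> support X act \<phi>} \<subseteq>
          snd ` {\<sigma> \<in> support X act \<phi>. \<not> degenerate X act (fst \<sigma>) (snd \<sigma>)}"
    by (force simp: degenerate_def)
  moreover have "finite {\<sigma> \<in> support X act \<phi>. \<not> degenerate X act (fst \<sigma>) (snd \<sigma>)}"
    using assms unfolding Zpow_fin_def by simp
  ultimately show ?thesis using finite_subset by blast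
qed

end

section \<open>The vertex indicator of a set of vertices\<close>

definition vertex_indices ::
  "(nat \<Rightarrow> nat \<Rightarrow> (nat \<Rightarrow> nat) \<Rightarrow> 'a \<Rightarrow> 'a) \<Rightarrow> 'a set \<Rightarrow> nat \<Rightarrow> 'a \<Rightarrow> nat set" where
  "vertex_indices act V n x = {i. i \<le> n \<and> act 0 n (\<lambda>_. i) x \<in> V}"

definition vertex_indicator ::
  "(nat \<Rightarrow> nat \<Rightarrow> (nat \<Rightarrow> nat) \<Rightarrow> 'a \<Rightarrow> 'a) \<Rightarrow> 'a set \<Rightarrow> nat \<Rightarrow> 'a \<Rightarrow> ipoly" where
  "vertex_indicator act V n x = (\<Sum>i\<in>vertex_indices act V n x. pvar i)"

lemma finite_vertex_indices: "finite (vertex_indices act V n x)"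
  unfolding vertex_indices_def by (rule finite_subset[of _ "{..n}"]) auto

lemma vertex_indicator_polys_upto: "vertex_indicator act V n x \<in> polys_upto n"
  unfolding vertex_indicator_def vertex_indices_def by (rule polys_upto_sum) (auto intro: polys_upto_pvar)

lemma vertex_indicator_one:
  assumes "\<And>i. i \<le> n \<Longrightarrow> act 0 n (\<lambda>_. i) x \<in> V"
  shows "delta_eq n (vertex_indicator act V n x) 1"
proof -
  have "vertex_indices act V n x = {..n}"
    using assms unfolding vertex_indices_def by auto
  then have "vertex_indicator act V n x - 1 = 1 * simplex_rel n"
    unfolding vertex_indicator_def simplex_rel_def by simp
  then show ?thesis
    unfolding delta_eq_def using polys_upto_one by blast
qed

context
  fixes X :: "nat \<Rightarrow> 'a set" and act :: "nat \<Rightarrow> nat \<Rightarrow> (nat \<Rightarrow> nat) \<Rightarrow> 'a \<Rightarrow> 'a"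
  assumes sset: "simplicial_set X act"
begin

text \<open>Naturality: pulling back along \<theta> sends t_j to the sum of the t_i with \<theta> i = j, and
  the vertices of the face are the images of vertices under \<theta>.\<close>
lemma vertex_indicator_natural:
  assumes \<theta>: "mono_map m n \<theta>" and x: "x \<in> X n"
  shows "vertex_indicator act V m (act m n \<theta> x) = delta_pull m \<theta> (vertex_indicator act V n x)"
proof -
  let ?S = "vertex_indices act V n x"
  have "delta_pull m \<theta> (vertex_indicator act V n x) = (\<Sum>i\<in>?S. \<Sum>j\<in>{j. j \<le> m \<and> \<theta> j = i}. pvar j)"
    unfolding delta_pull_def vertex_indicator_def by (rule psubst_sum_pvar[OF finite_vertex_indices])
  also have "\<dots> = (\<Sum>j\<in>{j. j \<le> m \<and> \<theta> j \<in> ?S}. pvar j)"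
  proof -
    have "finite {j. j \<le> m \<and> \<theta> j \<in> ?S}" by (rule finite_subset[of _ "{..m}"]) auto
    then have "(\<Sum>j\<in>{j. j \<le> m \<and> \<theta> j \<in> ?S}. pvar j) =
        (\<Sum>i\<in>?S. \<Sum>j\<in>{j \<in> {j. j \<le> m \<and> \<theta> j \<in> ?S}. \<theta> j = i}. pvar j)"
      by (rule sum.group[symmetric]) (auto simp: finite_vertex_indices)
    then show ?thesis by (auto intro!: sum.cong)
  qed
  also have "{j. j \<le> m \<and> \<theta> j \<in> ?S} = vertex_indices act V m (act m n \<theta> x)"
  proof -
    have "act 0 m (\<lambda>_. j) (act m n \<theta> x) = act 0 n (\<lambda>_. \<theta> j) x" if "j \<le> m" for j
      using act_comp[OF sset mono_map_const[OF that] \<theta> x] by (simp add: comp_def)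
    moreover have "j \<le> m \<Longrightarrow> \<theta> j \<le> n" for j using \<theta> unfolding mono_map_def by simp
    ultimately show ?thesis unfolding vertex_indices_def by auto
  qed
  finally show ?thesis unfolding vertex_indicator_def by simp
qed

lemma vertex_indicator_in_Zpow: "vertex_indicator act V \<in> Zpow X act"
  unfolding Zpow_def delta_eq_def
  using vertex_indicator_polys_upto vertex_indicator_natural polys_upto_zero by fastforce

lemma vertex_indicator_support_cover:
  assumes \<sigma>: "\<sigma> \<in> support X act (vertex_indicator act V)"
  obtains v n' y where "v \<in> V" "y \<in> X n'" "\<not> degenerate X act n' y"
    "(0, v) \<in> generated act (n', y)" "\<sigma> \<in> generated act (n', y)"
proof -
  obtain n x where x: "x \<in> X n" "\<not> delta_eq n (vertex_indicator act V n x) 0"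
      "\<sigma> \<in> generated act (n, x)"
    using \<sigma> by (rule in_supportE)
  have "vertex_indices act V n x \<noteq> {}"
  proof
    assume "vertex_indices act V n x = {}"
    then have "vertex_indicator act V n x - 0 = 0 * simplex_rel n"
      by (simp add: vertex_indicator_def)
    then show False using x(2) polys_upto_zero unfolding delta_eq_def by blast
  qed
  then obtain i where i: "i \<le> n" "act 0 n (\<lambda>_. i) x \<in> V"
    unfolding vertex_indices_def by auto
  obtain n' y \<theta> where y: "y \<in> X n'" "\<not> degenerate X act n' y" "mono_map n n' \<theta>"
      "x = act n n' \<theta> y"
    using degeneracy_of_nondegenerate[OF sset x(1)] by blast
  have "(n, x) \<in> generated act (n', y)" using y by (auto simp: generated_iff)
  then have sub: "generated act (n, x) \<subseteq> generated act (n', y)"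
    by (rule generated_trans[OF sset y(1)])
  show thesis
  proof (rule that[OF i(2) y(1,2)])
    show "(0, act 0 n (\<lambda>_. i) x) \<in> generated act (n', y)"
      using subsetD[OF sub vertex_in_generated[OF i(1)]] .
    show "\<sigma> \<in> generated act (n', y)" using subsetD[OF sub x(3)] .
  qed
qed

lemma vertex_indicator_in_Zpow_fin:
  assumes lf: "locally_finite X act" and V: "finite V" "V \<subseteq> X 0"
  shows "vertex_indicator act V \<in> Zpow_fin X act"
proof -
  let ?nd = "\<lambda>A. {\<sigma> \<in> A. \<not> degenerate X act (fst \<sigma>) (snd \<sigma>)}"
  define star where "star v = {\<tau> \<in> simplices X. \<not> degenerate X act (fst \<tau>) (snd \<tau>) \<and>
                                  generated act (0, v) \<subseteq> generated act \<tau>}" for v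
  have "?nd (support X act (vertex_indicator act V)) \<subseteq> (\<Union>v\<in>V. \<Union>\<tau>\<in>star v. ?nd (generated act \<tau>))"
  proof
    fix \<sigma> assume "\<sigma> \<in> ?nd (support X act (vertex_indicator act V))"
    then obtain v n' y where "v \<in> V" "y \<in> X n'" "\<not> degenerate X act n' y"
        "(0, v) \<in> generated act (n', y)" "\<sigma> \<in> generated act (n', y)"
        "\<not> degenerate X act (fst \<sigma>) (snd \<sigma>)"
      using vertex_indicator_support_cover by blast
    then show "\<sigma> \<in> (\<Union>v\<in>V. \<Union>\<tau>\<in>star v. ?nd (generated act \<tau>))"
      unfolding star_def using generated_trans[OF sset] by (force simp: simplices_def)
  qed
  moreover have "finite (\<Union>v\<in>V. \<Union>\<tau>\<in>star v. ?nd (generated act \<tau>))"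
  proof (intro finite_UN_I V(1))
    fix v assume "v \<in> V"
    then have "(0, v) \<in> simplices X" using V(2) by (auto simp: simplices_def)
    then show "finite (star v)"
      using lf unfolding locally_finite_def star_def by blast
    fix \<tau> assume "\<tau> \<in> star v"
    then show "finite (?nd (generated act \<tau>))"
      using finite_nondegenerate_faces[OF sset] by (auto simp: star_def simplices_def)
  qed
  ultimately show ?thesis
    unfolding Zpow_fin_def using vertex_indicator_in_Zpow finite_subset by blast
qed

end

theorem proposition9p7:
  fixes X :: "nat \<Rightarrow> 'a set" and act :: "nat \<Rightarrow> nat \<Rightarrow> (nat \<Rightarrow> nat) \<Rightarrow> 'a \<Rightarrow> 'a"
    and F :: "(nat \<Rightarrow> 'a \<Rightarrow> ipoly) set"
  assumes "simplicial_set X act"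
    and "locally_finite X act"
    and "finite F"
    and "F \<subseteq> Zpow_fin X act"
  shows "\<exists>\<mu>\<in>Zpow_fin X act. \<forall>\<phi>\<in>F. \<forall>n. \<forall>x\<in>X n.
           delta_eq n (\<phi> n x * \<mu> n x) (\<phi> n x) \<and> delta_eq n (\<mu> n x * \<phi> n x) (\<phi> n x)"
proof -
  define V where "V = (\<Union>\<phi>\<in>F. {v. (0, v) \<in> support X act \<phi>})"
  have "finite V" unfolding V_def using assms(3,4) finite_support_vertices[OF assms(1)] by blast
  moreover have "V \<subseteq> X 0"
    unfolding V_def using support_subset_simplices[OF assms(1)] by (auto simp: simplices_def)
  ultimately have \<mu>: "vertex_indicator act V \<in> Zpow_fin X act"
    using vertex_indicator_in_Zpow_fin[OF assms(1,2)] by blast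
  have "delta_eq n (\<phi> n x * vertex_indicator act V n x) (\<phi> n x)"
    if \<phi>: "\<phi> \<in> F" and x: "x \<in> X n" for \<phi> n x
  proof (cases "delta_eq n (\<phi> n x) 0")
    case True
    then show ?thesis by (rule delta_eq_mult_zero[OF _ vertex_indicator_polys_upto])
  next
    case False
    then have "(n, x) \<in> support X act \<phi>" using nonzero_in_support[OF assms(1) x] by blast
    then have "delta_eq n (vertex_indicator act V n x) 1"
      using vertex_in_support[OF assms(1)] \<phi> unfolding V_def by (intro vertex_indicator_one) blast
    moreover have "\<phi> n x \<in> polys_upto n" using \<phi> x assms(4) by (auto simp: Zpow_fin_def Zpow_def)
    ultimately show ?thesis by (rule delta_eq_mult_one)
  qed
  then show ?thesis using \<mu> by (auto simp: mult.commute intro!: bexI[of _ "vertex_indicator act V"])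
qed

end
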